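(* Let $(X,\phi)$ be a dynamical system with $X$ locally compact metrizable and $\phi$ a homeomorphism, let $\mathcal A = C_0(X)\times_\phi \mathbb Z_+$ be its semicrossed product, and let $(X_\gamma)_{\gamma\le\gamma_0}$ be the transfinite sequence of sets of iterated non-wandering points defined below. For each ordinal $\gamma\le\gamma_0$ let $$\mathcal I_\gamma = \{A\in\mathcal A : E_0(A)=0,\ E_n(A)(x)=0 \text{ for all } x\in X_\gamma \text{ and all integers } n\ge 1\}.$$ If $\gamma\le\gamma_0$ is a limit ordinal, then $\mathcal I_\gamma = \overline{\bigcup_{\beta<\gamma}\mathcal I_\beta}$ (closure in the norm of $\mathcal A$).
   Context: Semicrossed product: let $X$ be a locally compact metrizable space and $\phi:X\to X$ a homeomorphism; set $\alpha_n(f)=f\circ\phi^n$ for $f\in C_0(X)$, $n\in\mathbb Z_+$. On $\ell^1(\mathbb Z_+,C_0(X))$, whose elements are written as formal series $\sum_{n\ge0}U^nf_n$ with norm $\sum_n\|f_n\|_\infty$, define multiplication by $U^nf\,U^mg=U^{n+m}(\alpha_m(f)g)$ extended by linearity and continuity. Fix a faithful nondegenerate representation of $C_0(X)$ on a Hilbert space $\mathcal H_0$ and represent $\ell^1(\mathbb Z_+,C_0(X))$ on $\mathcal H_0\otimes\ell^2(\mathbb Z_+)$ by $\pi(U^nf)(\xi\otimes e_k)=\alpha_k(f)\xi\otimes e_{k+n}$. The semicrossed product $\mathcal A=C_0(X)\times_\phi\mathbb Z_+$ is the operator-norm closure of the image (independent of the choice of $\mathcal H_0$ up to isometric isomorphism).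 The Fourier coefficient maps $E_n(\sum_m U^mf_m)=f_n$ are contractive in the operator norm and extend to contractions $E_n:\mathcal A\to C_0(X)$; an element $A\in\mathcal A$ is $0$ iff $E_n(A)=0$ for all $n$. Iterated non-wandering sets: a set $Y\subseteq X$ is wandering if $\phi^m(Y)\cap\phi^n(Y)=\emptyset$ for all $m\ne n$ in $\mathbb Z_+$; a point is wandering if it has an open wandering neighbourhood, otherwise non-wandering. Let $X_1$ be the set of non-wandering points of $(X,\phi)$ and $\phi_1=\phi|_{X_1}$. Recursively, $X_{\gamma+1}$ is the set of non-wandering points of the system $(X_\gamma,\phi_\gamma)$ and $\phi_{\gamma+1}=\phi|_{X_{\gamma+1}}$; for a limit ordinal $\gamma$, $X_\gamma=\bigcap_{\beta<\gamma}X_\beta$ and $\phi_\gamma=\phi|_{X_\gamma}$. This process stabilizes at some ordinal $\gamma_0$. (Convention: $X_0 = X$.) *)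

theory Defs
  imports "HOL-Analysis.Analysis"
begin

definition wandering_set :: "('a \<Rightarrow> 'a) \<Rightarrow> 'a set \<Rightarrow> bool" where
  "wandering_set \<phi> V \<longleftrightarrow>
     (\<forall>m n. m \<noteq> n \<longrightarrow> (\<phi> ^^ m) ` V \<inter> (\<phi> ^^ n) ` V = {})"

definition nonwandering :: "('a::topological_space \<Rightarrow> 'a) \<Rightarrow> 'a set \<Rightarrow> 'a set" where
  "nonwandering \<phi> Y =
     {y \<in> Y. \<not> (\<exists>V. openin (top_of_set Y) V \<and> y \<in> V \<and> wandering_set \<phi> V)}"

text \<open>Ordinal-like notions in a well-order (the index type plays the role of an
  initial segment of the ordinals).\<close>
definition is_succ_of :: "'o::wellorder \<Rightarrow> 'o \<Rightarrow> bool" where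
  "is_succ_of i j \<longleftrightarrow> j < i \<and> (\<forall>k. \<not> (j < k \<and> k < i))"

definition is_limit :: "'o::wellorder \<Rightarrow> bool" where
  "is_limit i \<longleftrightarrow> (\<exists>j. j < i) \<and> (\<forall>j<i. \<exists>k. j < k \<and> k < i)"

definition iterated_nonwandering :: "('a::topological_space \<Rightarrow> 'a) \<Rightarrow> ('o::wellorder \<Rightarrow> 'a set) \<Rightarrow> bool" where
  "iterated_nonwandering \<phi> Xs \<longleftrightarrow>
     (\<forall>i. (\<forall>j. \<not> j < i) \<longrightarrow> Xs i = UNIV) \<and>
     (\<forall>i j. is_succ_of i j \<longrightarrow> Xs i = nonwandering \<phi> (Xs j)) \<and>
     (\<forall>i. is_limit i \<longrightarrow> Xs i = (\<Inter>j\<in>{j. j < i}. Xs j))"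

definition C0 :: "('a::topological_space \<Rightarrow> complex) set" where
  "C0 = {f. continuous_on UNIV f \<and>
           (\<forall>e>0. \<exists>K. compact K \<and> (\<forall>x. x \<notin> K \<longrightarrow> cmod (f x) < e))}"

text \<open>An element of the semicrossed product is represented by its sequence of Fourier
  coefficients F n = E_n(A). Its operator is computed in the (faithful, nondegenerate)
  representation of C_0(X) on l^2(X) by multiplication; this splits into the orbit
  representations pi_x on l^2(Z_+), whose matrix is\<close>
definition sc_entry :: "('a \<Rightarrow> 'a) \<Rightarrow> (nat \<Rightarrow> 'a \<Rightarrow> complex) \<Rightarrow> 'a \<Rightarrow> nat \<Rightarrow> nat \<Rightarrow> complex" where
  "sc_entry \<phi> F x j k = (if k \<le> j then F (j - k) ((\<phi> ^^ k) x) else 0)"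

text \<open>Operator norm (possibly infinite), as supremum over finite sections / finitely
  supported unit vectors, and over all points x.\<close>
definition sc_norm :: "('a \<Rightarrow> 'a) \<Rightarrow> (nat \<Rightarrow> 'a \<Rightarrow> complex) \<Rightarrow> ereal" where
  "sc_norm \<phi> F =
     (SUP x. SUP N. SUP M. SUP v \<in> {v :: nat \<Rightarrow> complex. (\<Sum>k<N. (cmod (v k))\<^sup>2) \<le> 1}.
        ereal (sqrt (\<Sum>j<M. (cmod (\<Sum>k<N. sc_entry \<phi> F x j k * v k))\<^sup>2)))"

definition sc_poly :: "(nat \<Rightarrow> 'a::topological_space \<Rightarrow> complex) \<Rightarrow> bool" where
  "sc_poly P \<longleftrightarrow> finite {n. P n \<noteq> (\<lambda>_. 0)} \<and> (\<forall>n. P n \<in> C0)"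

text \<open>The semicrossed product: norm closure of the polynomials sum U^n f_n.\<close>
definition semicrossed :: "('a::topological_space \<Rightarrow> 'a) \<Rightarrow> (nat \<Rightarrow> 'a \<Rightarrow> complex) set" where
  "semicrossed \<phi> =
     {F. \<forall>e>0. \<exists>P. sc_poly P \<and> sc_norm \<phi> (\<lambda>n y. F n y - P n y) < ereal e}"

definition sc_closure :: "('a::topological_space \<Rightarrow> 'a) \<Rightarrow> (nat \<Rightarrow> 'a \<Rightarrow> complex) set \<Rightarrow> (nat \<Rightarrow> 'a \<Rightarrow> complex) set" where
  "sc_closure \<phi> S =
     {F \<in> semicrossed \<phi>. \<forall>e>0. \<exists>G\<in>S. sc_norm \<phi> (\<lambda>n y. F n y - G n y) < ereal e}"

definition sc_ideal :: "('a::topological_space \<Rightarrow> 'a) \<Rightarrow> 'a set \<Rightarrow> (nat \<Rightarrow> 'a \<Rightarrow> complex) set" where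
  "sc_ideal \<phi> Y =
     {F \<in> semicrossed \<phi>. F 0 = (\<lambda>_. 0) \<and> (\<forall>n\<ge>1. \<forall>x\<in>Y. F n x = 0)}"

end

theory Submission
  imports Defs
begin

text \<open>The closure of \<open>\<Union>\<^sub>\<beta>\<^sub><\<^sub>\<gamma> I\<^sub>\<beta>\<close> lies in \<open>I\<^sub>\<gamma>\<close> because the Fourier coefficients are
  contractive and \<open>X\<^sub>\<gamma> = \<Inter>\<^sub>\<beta>\<^sub><\<^sub>\<gamma> X\<^sub>\<beta>\<close>. Conversely, every \<open>A\<close> in the semicrossed product is the
  norm limit of its Fejer means \<open>\<sigma>\<^sub>K(A) = \<Sum>\<^sub>n\<^sub>\<le>\<^sub>K (1 - n/(K+1)) U\<^sup>n E\<^sub>n(A)\<close>, because the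
  Fejer multipliers are contractive. For \<open>A \<in> I\<^sub>\<gamma>\<close>, pulling each of the \<open>K+1\<close> coefficients of
  \<open>\<sigma>\<^sub>K(A)\<close> radially towards \<open>0\<close> by at most \<open>d\<close> costs at most \<open>(K+1)d\<close> in norm and leaves
  coefficients supported in the compact set \<open>S = {y. \<exists>n\<le>K. d \<le> |E\<^sub>n(A)(y)|}\<close>. Since \<open>S\<close> misses
  \<open>X\<^sub>\<gamma>\<close>, the intersection of the decreasing closed sets \<open>X\<^sub>\<beta>\<close>, compactness makes it miss some
  \<open>X\<^sub>\<beta>\<close> with \<open>\<beta> < \<gamma>\<close>, so the modified element lies in \<open>I\<^sub>\<beta>\<close>.\<close>

lemma weighted_Cauchy_Schwarz_sum:
  fixes w u :: "'i \<Rightarrow> real"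
  assumes "\<And>i. i \<in> I \<Longrightarrow> 0 \<le> w i"
  shows "(\<Sum>i\<in>I. w i * u i)\<^sup>2 \<le> (\<Sum>i\<in>I. w i) * (\<Sum>i\<in>I. w i * (u i)\<^sup>2)"
proof -
  have "(\<Sum>i\<in>I. w i * u i) = (\<Sum>i\<in>I. sqrt (w i) * (sqrt (w i) * u i))"
    by (rule sum.cong) (auto simp: assms mult.assoc[symmetric])
  also have "(\<dots>)\<^sup>2 \<le> (\<Sum>i\<in>I. (sqrt (w i))\<^sup>2) * (\<Sum>i\<in>I. (sqrt (w i) * u i)\<^sup>2)"
    by (rule Cauchy_Schwarz_ineq_sum)
  also have "\<dots> = (\<Sum>i\<in>I. w i) * (\<Sum>i\<in>I. w i * (u i)\<^sup>2)"
    using assms by (simp add: power_mult_distrib)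
  finally show ?thesis .
qed

section \<open>Norm bounds in the semicrossed product\<close>

definition sc_row ::
    "('a \<Rightarrow> 'a) \<Rightarrow> (nat \<Rightarrow> 'a \<Rightarrow> complex) \<Rightarrow> 'a \<Rightarrow> nat \<Rightarrow> (nat \<Rightarrow> complex) \<Rightarrow> nat \<Rightarrow> complex"
  where "sc_row \<phi> F x N v j = (\<Sum>k<N. sc_entry \<phi> F x j k * v k)"

definition sc_bound :: "('a \<Rightarrow> 'a) \<Rightarrow> (nat \<Rightarrow> 'a \<Rightarrow> complex) \<Rightarrow> real \<Rightarrow> bool" where
  "sc_bound \<phi> F c \<longleftrightarrow> (\<forall>x N M v. (\<Sum>k<N. (cmod (v k))\<^sup>2) \<le> 1 \<longrightarrow>
      sqrt (\<Sum>j<M. (cmod (sc_row \<phi> F x N v j))\<^sup>2) \<le> c)"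

lemma sc_norm_le_iff_sc_bound: "sc_norm \<phi> F \<le> ereal c \<longleftrightarrow> sc_bound \<phi> F c"
  unfolding sc_norm_def sc_bound_def sc_row_def by (auto simp: SUP_le_iff)

lemma sc_bound_if_sc_norm_less: "sc_norm \<phi> F < ereal c \<Longrightarrow> sc_bound \<phi> F c"
  using sc_norm_le_iff_sc_bound less_imp_le by blast

lemma sc_bound_nonneg: "sc_bound \<phi> F c \<Longrightarrow> 0 \<le> c"
  unfolding sc_bound_def by (drule spec[of _ undefined], drule spec[of _ 0], drule spec[of _ 0]) simp

lemma sc_bound_coeff:
  assumes "sc_bound \<phi> F c" shows "cmod (F n x) \<le> c"
proof -
  define e0 :: "nat \<Rightarrow> complex" where "e0 k = (if k = 0 then 1 else 0)" for k
  have row: "sc_row \<phi> F x 1 e0 j = F j x" for j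
    unfolding sc_row_def e0_def sc_entry_def by simp
  have "(\<Sum>k<1. (cmod (e0 k))\<^sup>2) \<le> 1" by (simp add: e0_def)
  with assms have "sqrt (\<Sum>j<Suc n. (cmod (sc_row \<phi> F x 1 e0 j))\<^sup>2) \<le> c"
    unfolding sc_bound_def by blast
  moreover have "(cmod (F n x))\<^sup>2 \<le> (\<Sum>j<Suc n. (cmod (F j x))\<^sup>2)"
    by (rule member_le_sum) auto
  ultimately show ?thesis
    unfolding row by (metis real_sqrt_abs real_sqrt_le_mono abs_norm_cancel order_trans)
qed

lemma sc_row_scale: "sc_row \<phi> F x N (\<lambda>k. t * v k) j = t * sc_row \<phi> F x N v j"
  unfolding sc_row_def sum_distrib_left by (rule sum.cong) (simp_all add: mult_ac)

lemma sc_bound_homogeneous: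
  assumes "sc_bound \<phi> F c"
  shows "(\<Sum>j<M. (cmod (sc_row \<phi> F x N v j))\<^sup>2) \<le> c\<^sup>2 * (\<Sum>k<N. (cmod (v k))\<^sup>2)"
proof -
  define s where "s = (\<Sum>k<N. (cmod (v k))\<^sup>2)"
  show ?thesis
  proof (cases "s = 0")
    case True
    then have "\<forall>k<N. v k = 0"
      unfolding s_def by (subst (asm) sum_nonneg_eq_0_iff) auto
    then have "sc_row \<phi> F x N v j = 0" for j
      unfolding sc_row_def by (auto intro!: sum.neutral)
    then show ?thesis by (simp add: sum_nonneg)
  next
    case False
    then have s: "0 < s" unfolding s_def by (simp add: order_less_le sum_nonneg)
    define t where "t = complex_of_real (1 / sqrt s)"
    have "(\<Sum>k<N. (cmod (t * v k))\<^sup>2) = (\<Sum>k<N. (cmod (v k))\<^sup>2) / s"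
      using s by (simp add: t_def norm_divide power_divide sum_divide_distrib)
    then have "sqrt (\<Sum>j<M. (cmod (sc_row \<phi> F x N (\<lambda>k. t * v k) j))\<^sup>2) \<le> c"
      using assms s unfolding sc_bound_def s_def by simp
    moreover have "(\<Sum>j<M. (cmod (sc_row \<phi> F x N (\<lambda>k. t * v k) j))\<^sup>2)
        = (\<Sum>j<M. (cmod (sc_row \<phi> F x N v j))\<^sup>2) / s"
      using s unfolding sc_row_scale
      by (simp add: t_def norm_divide power_divide sum_divide_distrib)
    ultimately have "(\<Sum>j<M. (cmod (sc_row \<phi> F x N v j))\<^sup>2) / s \<le> c\<^sup>2"
      by (metis sqrt_le_D)
    then show ?thesis using s unfolding s_def by (simp add: pos_divide_le_eq mult_ac)
  qed
qed

lemma sc_boundI_homogeneous: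
  assumes "0 \<le> c"
    and "\<And>x N M v. (\<Sum>j<M. (cmod (sc_row \<phi> F x N v j))\<^sup>2) \<le> c\<^sup>2 * (\<Sum>k<N. (cmod (v k))\<^sup>2)"
  shows "sc_bound \<phi> F c"
  unfolding sc_bound_def
proof (intro allI impI)
  fix x and N M :: nat and v :: "nat \<Rightarrow> complex"
  assume v: "(\<Sum>k<N. (cmod (v k))\<^sup>2) \<le> 1"
  have "(\<Sum>j<M. (cmod (sc_row \<phi> F x N v j))\<^sup>2) \<le> c\<^sup>2 * (\<Sum>k<N. (cmod (v k))\<^sup>2)"
    by (rule assms(2))
  also have "\<dots> \<le> c\<^sup>2" using v by (simp add: mult_left_le)
  finally have "(\<Sum>j<M. (cmod (sc_row \<phi> F x N v j))\<^sup>2) \<le> c\<^sup>2" .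
  then show "sqrt (\<Sum>j<M. (cmod (sc_row \<phi> F x N v j))\<^sup>2) \<le> c"
    using assms(1) by (simp add: real_le_lsqrt)
qed

lemma sc_bound_mono: "sc_bound \<phi> F c \<Longrightarrow> c \<le> c' \<Longrightarrow> sc_bound \<phi> F c'"
  unfolding sc_bound_def by (meson order_trans)

lemma sc_bound_add:
  assumes "sc_bound \<phi> F a" "sc_bound \<phi> G b"
  shows "sc_bound \<phi> (\<lambda>n y. F n y + G n y) (a + b)"
  unfolding sc_bound_def
proof (intro allI impI)
  fix x and N M :: nat and v :: "nat \<Rightarrow> complex" assume v: "(\<Sum>k<N. (cmod (v k))\<^sup>2) \<le> 1"
  let ?r = "\<lambda>F j. cmod (sc_row \<phi> F x N v j)"
  have "sc_row \<phi> (\<lambda>n y. F n y + G n y) x N v j = sc_row \<phi> F x N v j + sc_row \<phi> G x N v j" for j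
    unfolding sc_row_def sum.distrib[symmetric]
    by (rule sum.cong) (auto simp: sc_entry_def distrib_right)
  then have "sqrt (\<Sum>j<M. (?r (\<lambda>n y. F n y + G n y) j)\<^sup>2)
      \<le> L2_set (\<lambda>j. ?r F j + ?r G j) {..<M}"
    unfolding L2_set_def[symmetric] by (intro L2_set_mono) (auto intro: norm_triangle_ineq)
  also have "\<dots> \<le> L2_set (?r F) {..<M} + L2_set (?r G) {..<M}"
    by (rule L2_set_triangle_ineq)
  also have "\<dots> \<le> a + b"
    using assms v unfolding sc_bound_def L2_set_def by (intro add_mono) blast+
  finally show "sqrt (\<Sum>j<M. (?r (\<lambda>n y. F n y + G n y) j)\<^sup>2) \<le> a + b" .
qed

lemma sc_bound_uminus:
  assumes "sc_bound \<phi> F a" shows "sc_bound \<phi> (\<lambda>n y. - F n y) a"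
proof -
  have "sc_row \<phi> (\<lambda>n y. - F n y) x N v j = - sc_row \<phi> F x N v j" for x N v j
    unfolding sc_row_def sum_negf[symmetric] by (rule sum.cong) (auto simp: sc_entry_def)
  with assms show ?thesis unfolding sc_bound_def by simp
qed

lemma sc_bound_zero: "sc_bound \<phi> (\<lambda>n y. 0) 0"
  unfolding sc_bound_def sc_row_def sc_entry_def by simp

lemma sum_reindex_le_sum_lessThan:
  fixes b :: "nat \<Rightarrow> real"
  assumes "finite A" "inj_on g A" "g ` A \<subseteq> {..<D}" "\<And>n. 0 \<le> b n"
  shows "(\<Sum>a\<in>A. b (g a)) \<le> (\<Sum>n<D. b n)"
proof -
  have "(\<Sum>a\<in>A. b (g a)) = (\<Sum>n\<in>g ` A. b n)" using assms(2) by (simp add: sum.reindex)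
  also have "\<dots> \<le> (\<Sum>n<D. b n)" by (rule sum_mono2) (use assms in auto)
  finally show ?thesis .
qed

lemma Schur_test:
  fixes a :: "nat \<Rightarrow> nat \<Rightarrow> 'b::real_normed_field" and w :: "nat \<Rightarrow> nat \<Rightarrow> real"
  assumes entry: "\<And>j k. norm (a j k) \<le> w j k"
    and row_sum: "\<And>j. (\<Sum>k<N. w j k) \<le> B" and col_sum: "\<And>k. (\<Sum>j<M. w j k) \<le> B"
    and "0 \<le> B"
  shows "(\<Sum>j<M. (norm (\<Sum>k<N. a j k * v k))\<^sup>2) \<le> B\<^sup>2 * (\<Sum>k<N. (norm (v k))\<^sup>2)"
proof -
  have w_nonneg: "0 \<le> w j k" for j k using entry[of j k] norm_ge_zero order_trans by blast
  have row: "(norm (\<Sum>k<N. a j k * v k))\<^sup>2 \<le> B * (\<Sum>k<N. w j k * (norm (v k))\<^sup>2)" for j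
  proof -
    have "norm (\<Sum>k<N. a j k * v k) \<le> (\<Sum>k<N. w j k * norm (v k))"
      by (rule order_trans[OF norm_sum sum_mono]) (simp add: norm_mult mult_right_mono entry)
    then have "(norm (\<Sum>k<N. a j k * v k))\<^sup>2 \<le> (\<Sum>k<N. w j k * norm (v k))\<^sup>2"
      by (rule power_mono) simp
    also have "\<dots> \<le> (\<Sum>k<N. w j k) * (\<Sum>k<N. w j k * (norm (v k))\<^sup>2)"
      by (rule weighted_Cauchy_Schwarz_sum) (simp add: w_nonneg)
    also have "\<dots> \<le> B * (\<Sum>k<N. w j k * (norm (v k))\<^sup>2)"
      by (rule mult_right_mono[OF row_sum]) (simp add: sum_nonneg w_nonneg)
    finally show ?thesis .
  qed
  have "(\<Sum>j<M. (norm (\<Sum>k<N. a j k * v k))\<^sup>2) \<le> (\<Sum>j<M. B * (\<Sum>k<N. w j k * (norm (v k))\<^sup>2))"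
    by (rule sum_mono) (rule row)
  also have "\<dots> = B * (\<Sum>k<N. (norm (v k))\<^sup>2 * (\<Sum>j<M. w j k))"
    by (simp add: sum_distrib_left sum_distrib_right sum.swap[of _ "{..<M}"] mult_ac)
  also have "\<dots> \<le> B * (\<Sum>k<N. (norm (v k))\<^sup>2 * B)"
    by (intro mult_left_mono sum_mono col_sum \<open>0 \<le> B\<close>) simp_all
  also have "\<dots> = B\<^sup>2 * (\<Sum>k<N. (norm (v k))\<^sup>2)"
    by (simp add: sum_distrib_left sum_distrib_right power2_eq_square mult_ac)
  finally show ?thesis .
qed

text \<open>Schur test for the Toeplitz majorant \<open>(sup |E\<^sub>j\<^sub>-\<^sub>k(Q)|)\<^sub>j\<^sub>,\<^sub>k\<close> of the matrix of \<open>Q\<close>.\<close>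
lemma sc_bound_coeff_sum:
  fixes b :: "nat \<Rightarrow> real"
  assumes Qb: "\<And>n y. cmod (Q n y) \<le> b n" and b_nonneg: "\<And>n. 0 \<le> b n"
    and b_vanish: "\<And>n. D \<le> n \<Longrightarrow> b n = 0" and sum_b: "(\<Sum>n<D. b n) \<le> B"
  shows "sc_bound \<phi> Q B"
proof (rule sc_boundI_homogeneous)
  show B: "0 \<le> B" using sum_b b_nonneg by (meson order_trans sum_nonneg)
  fix x and N M :: nat and v :: "nat \<Rightarrow> complex"
  define w where "w j k = (if k \<le> j \<and> j - k < D then b (j - k) else 0)" for j k
  have entry: "cmod (sc_entry \<phi> Q x j k) \<le> w j k" for j k
    using Qb[of "j - k"] b_vanish[of "j - k"] unfolding sc_entry_def w_def by auto
  have row_sum: "(\<Sum>k<N. w j k) \<le> B" for j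
  proof -
    have "(\<Sum>k<N. w j k) = (\<Sum>k\<in>{k\<in>{..<N}. k \<le> j \<and> j - k < D}. b (j - k))"
      unfolding w_def sum.inter_filter[OF finite_lessThan] ..
    also have "\<dots> \<le> (\<Sum>n<D. b n)"
      by (rule sum_reindex_le_sum_lessThan) (auto simp: inj_on_def b_nonneg)
    finally show ?thesis using sum_b by linarith
  qed
  have col_sum: "(\<Sum>j<M. w j k) \<le> B" for k
  proof -
    have "(\<Sum>j<M. w j k) = (\<Sum>j\<in>{j\<in>{..<M}. k \<le> j \<and> j - k < D}. b (j - k))"
      unfolding w_def sum.inter_filter[OF finite_lessThan] ..
    also have "\<dots> \<le> (\<Sum>n<D. b n)"
      by (rule sum_reindex_le_sum_lessThan) (auto simp: inj_on_def b_nonneg)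
    finally show ?thesis using sum_b by linarith
  qed
  show "(\<Sum>j<M. (cmod (sc_row \<phi> Q x N v j))\<^sup>2) \<le> B\<^sup>2 * (\<Sum>k<N. (cmod (v k))\<^sup>2)"
    unfolding sc_row_def by (rule Schur_test[OF entry row_sum col_sum B])
qed

section \<open>Fejer means\<close>

definition fejer_weight :: "nat \<Rightarrow> nat \<Rightarrow> real" where
  "fejer_weight K n = (if n \<le> K then 1 - real n / real (Suc K) else 0)"

definition sc_fejer_mean :: "nat \<Rightarrow> (nat \<Rightarrow> 'a \<Rightarrow> complex) \<Rightarrow> nat \<Rightarrow> 'a \<Rightarrow> complex" where
  "sc_fejer_mean K F n y = complex_of_real (fejer_weight K n) * F n y"

definition fejer_window :: "nat \<Rightarrow> nat \<Rightarrow> nat \<Rightarrow> real" where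
  "fejer_window K s k = (if k \<le> s \<and> s \<le> k + K then 1 else 0)"

lemma fejer_weight_bounds: "0 \<le> fejer_weight K n" "fejer_weight K n \<le> 1"
  unfolding fejer_weight_def by auto

lemma fejer_weight_eq_0: "K < n \<Longrightarrow> fejer_weight K n = 0"
  unfolding fejer_weight_def by simp

lemma one_minus_fejer_weight_le:
  assumes "n < D" shows "1 - fejer_weight K n \<le> real D / real (Suc K)"
proof (cases "n \<le> K")
  case True
  then show ?thesis
    using assms unfolding fejer_weight_def by (simp add: divide_right_mono)
next
  case False
  then have "1 \<le> real D / real (Suc K)" using assms by simp
  with False show ?thesis unfolding fejer_weight_def by simp
qed

lemma sum_fejer_window_le: "(\<Sum>s<S. fejer_window K s k) \<le> real (Suc K)"
proof -
  have "(\<Sum>s<S. fejer_window K s k) = (\<Sum>s\<in>{s\<in>{..<S}. k \<le> s \<and> s \<le> k + K}. 1)"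
    unfolding fejer_window_def sum.inter_filter[OF finite_lessThan] ..
  also have "\<dots> \<le> (\<Sum>s\<in>{k..k+K}. 1)" by (rule sum_mono2) auto
  finally show ?thesis by simp
qed

text \<open>The Fejer multiplier is an average of the compressions to the windows
  \<open>[s - K, s]\<close>, which is why it is contractive.\<close>
lemma fejer_weight_eq_window_average:
  assumes "k \<le> j" "k + K < S"
  shows "real (Suc K) * fejer_weight K (j - k) = (\<Sum>s<S. fejer_window K s j * fejer_window K s k)"
proof -
  have "(\<Sum>s<S. fejer_window K s j * fejer_window K s k) = (\<Sum>s<S. if j \<le> s \<and> s \<le> k + K then 1 else 0)"
    by (rule sum.cong) (use assms in \<open>auto simp: fejer_window_def\<close>)
  also have "\<dots> = (\<Sum>s\<in>{s\<in>{..<S}. j \<le> s \<and> s \<le> k + K}. 1)"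
    unfolding sum.inter_filter[OF finite_lessThan] ..
  also have "{s\<in>{..<S}. j \<le> s \<and> s \<le> k + K} = {j..k+K}" using assms by auto
  finally have windows: "(\<Sum>s<S. fejer_window K s j * fejer_window K s k) = real (card {j..k+K})"
    by simp
  show ?thesis
  proof (cases "j - k \<le> K")
    case True
    then have "real (card {j..k+K}) = real (Suc K) - real (j - k)"
      using assms by simp
    with True show ?thesis unfolding windows fejer_weight_def by (simp add: field_simps)
  next
    case False
    then show ?thesis unfolding windows fejer_weight_def by simp
  qed
qed

lemma sc_row_fejer_mean:
  assumes "N + K < S"
  shows "sc_row \<phi> (sc_fejer_mean K F) x N v j = complex_of_real (1 / real (Suc K)) *
    (\<Sum>s<S. complex_of_real (fejer_window K s j) *
       sc_row \<phi> F x N (\<lambda>k. complex_of_real (fejer_window K s k) * v k) j)"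
proof -
  let ?q = "complex_of_real (1 / real (Suc K))"
  have entry: "sc_entry \<phi> (sc_fejer_mean K F) x j k * v k = ?q * (\<Sum>s<S.
      complex_of_real (fejer_window K s j) * (sc_entry \<phi> F x j k * (complex_of_real (fejer_window K s k) * v k)))"
    if "k < N" for k
  proof (cases "k \<le> j")
    case True
    have "fejer_weight K (j - k) = 1 / real (Suc K) * (\<Sum>s<S. fejer_window K s j * fejer_window K s k)"
      using fejer_weight_eq_window_average[of k j K S] True that assms by (simp add: field_simps)
    then have "complex_of_real (fejer_weight K (j - k)) = ?q *
        (\<Sum>s<S. complex_of_real (fejer_window K s j) * complex_of_real (fejer_window K s k))"
      by simp
    with True show ?thesis
      unfolding sc_entry_def sc_fejer_mean_def by (simp add: sum_distrib_left sum_distrib_right mult_ac)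
  qed (simp add: sc_entry_def)
  have "sc_row \<phi> (sc_fejer_mean K F) x N v j = (\<Sum>k<N. ?q * (\<Sum>s<S.
      complex_of_real (fejer_window K s j) * (sc_entry \<phi> F x j k * (complex_of_real (fejer_window K s k) * v k))))"
    unfolding sc_row_def by (intro sum.cong) (auto simp: entry)
  also have "\<dots> = ?q * (\<Sum>s<S. complex_of_real (fejer_window K s j) *
      sc_row \<phi> F x N (\<lambda>k. complex_of_real (fejer_window K s k) * v k) j)"
    unfolding sc_row_def by (simp add: sum_distrib_left sum.swap[of _ "{..<N}"])
  finally show ?thesis .
qed

lemma fejer_window_bounds: "0 \<le> fejer_window K s k" "fejer_window K s k \<le> 1"
  unfolding fejer_window_def by auto

lemma norm_fejer_window_mult_sq:
  "(cmod (complex_of_real (fejer_window K s k) * z))\<^sup>2 = fejer_window K s k * (cmod z)\<^sup>2"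
  unfolding fejer_window_def by (simp add: norm_mult)

lemma norm_sc_row_fejer_mean_sq_le:
  assumes "N + K < S"
  shows "(cmod (sc_row \<phi> (sc_fejer_mean K F) x N v j))\<^sup>2 \<le> 1 / real (Suc K) *
    (\<Sum>s<S. (cmod (sc_row \<phi> F x N (\<lambda>k. complex_of_real (fejer_window K s k) * v k) j))\<^sup>2)"
proof -
  define q where "q = 1 / real (Suc K)"
  have q_nonneg: "0 \<le> q" unfolding q_def by simp
  define r where "r s = sc_row \<phi> F x N (\<lambda>k. complex_of_real (fejer_window K s k) * v k) j" for s
  have "sc_row \<phi> (sc_fejer_mean K F) x N v j
      = complex_of_real q * (\<Sum>s<S. complex_of_real (fejer_window K s j) * r s)"
    using sc_row_fejer_mean[OF assms] unfolding q_def r_def by simp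
  then have "cmod (sc_row \<phi> (sc_fejer_mean K F) x N v j)
      = q * cmod (\<Sum>s<S. complex_of_real (fejer_window K s j) * r s)"
    by (simp only: norm_mult norm_of_real abs_of_nonneg[OF q_nonneg])
  also have "\<dots> \<le> q * (\<Sum>s<S. cmod (complex_of_real (fejer_window K s j) * r s))"
    by (rule mult_left_mono[OF norm_sum q_nonneg])
  also have "\<dots> = q * (\<Sum>s<S. fejer_window K s j * cmod (r s))"
    by (simp add: norm_mult fejer_window_bounds)
  finally have "(cmod (sc_row \<phi> (sc_fejer_mean K F) x N v j))\<^sup>2
      \<le> q\<^sup>2 * (\<Sum>s<S. fejer_window K s j * cmod (r s))\<^sup>2"
    by (metis norm_ge_zero power_mono power_mult_distrib)
  also have "\<dots> \<le> q\<^sup>2 * ((\<Sum>s<S. fejer_window K s j) * (\<Sum>s<S. fejer_window K s j * (cmod (r s))\<^sup>2))"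
    by (rule mult_left_mono) (simp_all add: weighted_Cauchy_Schwarz_sum fejer_window_bounds)
  also have "\<dots> \<le> q\<^sup>2 * (real (Suc K) * (\<Sum>s<S. (cmod (r s))\<^sup>2))"
  proof -
    have "(\<Sum>s<S. fejer_window K s j * (cmod (r s))\<^sup>2) \<le> (\<Sum>s<S. (cmod (r s))\<^sup>2)"
      by (intro sum_mono mult_left_le_one_le) (simp_all add: fejer_window_bounds)
    then show ?thesis
      by (intro mult_left_mono mult_mono sum_fejer_window_le)
        (simp_all add: sum_nonneg fejer_window_bounds)
  qed
  also have "\<dots> = q * (\<Sum>s<S. (cmod (r s))\<^sup>2)" unfolding q_def by (simp add: power2_eq_square)
  finally show ?thesis unfolding q_def r_def .
qed

lemma sc_bound_fejer_mean:
  assumes F: "sc_bound \<phi> F c"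
  shows "sc_bound \<phi> (sc_fejer_mean K F) c"
proof (rule sc_boundI_homogeneous)
  show "0 \<le> c" using sc_bound_nonneg[OF F] .
  fix x and N M :: nat and v :: "nat \<Rightarrow> complex"
  define S where "S = N + K + 1"
  define q where "q = 1 / real (Suc K)"
  define r where "r s j = sc_row \<phi> F x N (\<lambda>k. complex_of_real (fejer_window K s k) * v k) j" for s j
  have "(\<Sum>j<M. (cmod (sc_row \<phi> (sc_fejer_mean K F) x N v j))\<^sup>2) \<le> (\<Sum>j<M. q * (\<Sum>s<S. (cmod (r s j))\<^sup>2))"
    unfolding q_def r_def by (intro sum_mono norm_sc_row_fejer_mean_sq_le) (simp add: S_def)
  also have "\<dots> = q * (\<Sum>s<S. (\<Sum>j<M. (cmod (r s j))\<^sup>2))"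
    by (simp add: sum_distrib_left sum.swap[of _ "{..<M}"])
  also have "\<dots> \<le> q * (\<Sum>s<S. c\<^sup>2 * (\<Sum>k<N. (cmod (complex_of_real (fejer_window K s k) * v k))\<^sup>2))"
    unfolding r_def q_def by (intro mult_left_mono sum_mono sc_bound_homogeneous[OF F]) simp
  also have "\<dots> = q * c\<^sup>2 * (\<Sum>k<N. (cmod (v k))\<^sup>2 * (\<Sum>s<S. fejer_window K s k))"
    unfolding norm_fejer_window_mult_sq
    by (simp add: sum_distrib_left sum_distrib_right sum.swap[of _ "{..<S}"] mult_ac)
  also have "\<dots> \<le> q * c\<^sup>2 * (\<Sum>k<N. (cmod (v k))\<^sup>2 * real (Suc K))"
    unfolding q_def by (intro mult_left_mono sum_mono sum_fejer_window_le) simp_all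
  also have "\<dots> = c\<^sup>2 * (\<Sum>k<N. (cmod (v k))\<^sup>2)"
    unfolding q_def by (simp add: sum_distrib_right[symmetric])
  finally show "(\<Sum>j<M. (cmod (sc_row \<phi> (sc_fejer_mean K F) x N v j))\<^sup>2) \<le> c\<^sup>2 * (\<Sum>k<N. (cmod (v k))\<^sup>2)" .
qed

lemma sc_bound_one_minus_fejer_weight:
  assumes Bf: "\<And>n y. cmod (P n y) \<le> Bf n" and D: "\<And>n. D \<le> n \<Longrightarrow> P n = (\<lambda>_. 0)"
  shows "sc_bound \<phi> (\<lambda>n y. complex_of_real (1 - fejer_weight K n) * P n y)
    (real D / real (Suc K) * (\<Sum>n<D. Bf n))"
proof (rule sc_bound_coeff_sum)
  let ?b = "\<lambda>n. if n < D then real D / real (Suc K) * Bf n else 0"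
  show "cmod (complex_of_real (1 - fejer_weight K n) * P n y) \<le> ?b n" for n y
  proof (cases "n < D")
    case True
    have "cmod (complex_of_real (1 - fejer_weight K n) * P n y) = (1 - fejer_weight K n) * cmod (P n y)"
      using fejer_weight_bounds[of K n] by (simp only: norm_mult norm_of_real abs_of_nonneg diff_ge_0_iff_ge)
    also have "\<dots> \<le> real D / real (Suc K) * Bf n"
      using fejer_weight_bounds[of K n]
      by (intro mult_mono one_minus_fejer_weight_le[OF True] Bf) simp_all
    finally show ?thesis using True by simp
  qed (use D in simp)
  have "0 \<le> Bf n" for n using Bf[of n undefined] norm_ge_zero order_trans by blast
  then show "0 \<le> ?b n" for n by simp
  show "?b n = 0" if "D \<le> n" for n using that by simp
  show "(\<Sum>n<D. ?b n) \<le> real D / real (Suc K) * (\<Sum>n<D. Bf n)" by (simp add: sum_distrib_left)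
qed

section \<open>Shrinking functions vanishing at infinity\<close>

lemma C0_bounded:
  assumes "f \<in> C0" shows "\<exists>B. \<forall>y. cmod (f y) \<le> B"
proof -
  obtain K where K: "compact K" "\<And>x. x \<notin> K \<Longrightarrow> cmod (f x) < 1"
    using assms zero_less_one unfolding C0_def by blast
  have "continuous_on K f" using assms unfolding C0_def by (auto intro: continuous_on_subset)
  then have "bounded (f ` K)" by (intro compact_imp_bounded compact_continuous_image K(1))
  then obtain B where B: "\<And>y. y \<in> K \<Longrightarrow> cmod (f y) \<le> B"
    unfolding bounded_iff by blast
  have "cmod (f y) \<le> max 1 B" for y
    using K(2)[of y] B[of y] by (cases "y \<in> K") auto
  then show ?thesis by blast
qed

lemma C0_dominated:
  assumes "f \<in> C0" "continuous_on UNIV g" "\<And>y. cmod (g y) \<le> cmod (f y)"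
  shows "g \<in> C0"
  unfolding C0_def mem_Collect_eq
proof (intro conjI assms(2) allI impI)
  fix e :: real assume "0 < e"
  then obtain K where "compact K" "\<forall>x. x \<notin> K \<longrightarrow> cmod (f x) < e"
    using assms(1) unfolding C0_def by blast
  then show "\<exists>K. compact K \<and> (\<forall>x. x \<notin> K \<longrightarrow> cmod (g x) < e)"
    using assms(3) le_less_trans by blast
qed

lemma compact_C0_superlevel:
  assumes "f \<in> C0" "0 < d" shows "compact {y. d \<le> cmod (f y)}"
proof -
  obtain K where K: "compact K" "\<And>x. x \<notin> K \<Longrightarrow> cmod (f x) < d"
    using assms unfolding C0_def by blast
  have "continuous_on UNIV f" using assms(1) unfolding C0_def by blast
  then have closed: "closed {y. d \<le> cmod (f y)}"
    by (intro closed_Collect_le continuous_intros)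
  have "{y. d \<le> cmod (f y)} = K \<inter> {y. d \<le> cmod (f y)}" using K(2) by force
  also have "compact \<dots>" by (rule compact_Int_closed[OF K(1) closed])
  finally show ?thesis .
qed

text \<open>Moves every value of \<open>f\<close> radially by \<open>min d |f y|\<close> towards \<open>0\<close>.\<close>
definition shrink :: "real \<Rightarrow> ('a \<Rightarrow> complex) \<Rightarrow> 'a \<Rightarrow> complex" where
  "shrink d f y = f y * complex_of_real (max 0 (cmod (f y) - d) / max (cmod (f y)) d)"

lemma continuous_on_shrink:
  assumes "continuous_on UNIV f" "0 < d" shows "continuous_on UNIV (shrink d f)"
  unfolding shrink_def[abs_def] using assms by (intro continuous_intros) (auto simp: max_def)

lemma norm_shrink_le: "0 < d \<Longrightarrow> cmod (shrink d f y) \<le> cmod (f y)"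
  unfolding shrink_def norm_mult norm_of_real
  by (intro mult_left_le) (auto simp: max_def divide_le_eq_1)

lemma norm_diff_shrink_le: "0 < d \<Longrightarrow> cmod (f y - shrink d f y) \<le> d"
proof (cases "cmod (f y) \<le> d")
  case False
  assume d: "0 < d"
  with False have nz: "cmod (f y) \<noteq> 0" by linarith
  with False have "f y - shrink d f y = f y * complex_of_real (d / cmod (f y))"
    unfolding shrink_def by (simp add: max_def field_simps)
  with nz d show ?thesis by (simp add: norm_mult norm_divide)
qed (simp add: shrink_def)

lemma shrink_eq_0: "cmod (f y) \<le> d \<Longrightarrow> shrink d f y = 0"
  unfolding shrink_def by simp

section \<open>Approximation in the semicrossed product\<close>

lemma semicrossed_approx:
  assumes "F \<in> semicrossed \<phi>" "0 < e"
  obtains P where "sc_poly P" "sc_bound \<phi> (\<lambda>n y. F n y - P n y) e"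
  using assms unfolding semicrossed_def by (blast dest: sc_bound_if_sc_norm_less)

lemma sc_poly_in_semicrossed:
  assumes "sc_poly P" shows "P \<in> semicrossed \<phi>"
  unfolding semicrossed_def mem_Collect_eq
proof (intro allI impI exI conjI)
  fix e :: real assume "0 < e"
  have "sc_norm \<phi> (\<lambda>n y. P n y - P n y) \<le> ereal 0"
    using sc_bound_zero by (simp add: sc_norm_le_iff_sc_bound)
  also have "\<dots> < ereal e" using \<open>0 < e\<close> by simp
  finally show "sc_norm \<phi> (\<lambda>n y. P n y - P n y) < ereal e" .
qed (use assms in simp)

lemma semicrossed_coeff_C0:
  assumes F: "F \<in> semicrossed \<phi>" shows "F n \<in> C0"
proof -
  have approx: "\<exists>p. p \<in> C0 \<and> (\<forall>y. cmod (F n y - p y) \<le> e)" if e: "0 < e" for e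
  proof -
    obtain P where P: "sc_poly P" "sc_bound \<phi> (\<lambda>n y. F n y - P n y) e"
      using semicrossed_approx[OF F e] .
    have "cmod (F n y - P n y) \<le> e" for y using sc_bound_coeff[OF P(2)] by simp
    then show ?thesis using P(1) unfolding sc_poly_def by blast
  qed
  then have "\<forall>k. \<exists>p. p \<in> C0 \<and> (\<forall>y. cmod (F n y - p y) \<le> 1 / real (Suc k))"
    by simp
  from choice[OF this] obtain p
    where p: "\<And>k. p k \<in> C0" "\<And>k y. cmod (F n y - p k y) \<le> 1 / real (Suc k)"
    by blast
  have "uniform_limit UNIV p (F n) sequentially"
    unfolding uniform_limit_sequentially_iff
  proof (intro allI impI)
    fix e :: real assume "0 < e"
    then obtain N where N: "inverse (real (Suc N)) < e" using reals_Archimedean by blast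
    have "dist (p k y) (F n y) < e" if "N \<le> k" for k y
    proof -
      have "dist (p k y) (F n y) \<le> 1 / real (Suc k)" using p(2) by (simp add: dist_norm norm_minus_commute)
      also have "\<dots> \<le> inverse (real (Suc N))" using that by (simp add: divide_inverse le_imp_inverse_le)
      finally show ?thesis using N by linarith
    qed
    then show "\<exists>N. \<forall>k\<ge>N. \<forall>y\<in>UNIV. dist (p k y) (F n y) < e" by blast
  qed
  then have "continuous_on UNIV (F n)"
    using p(1) unfolding C0_def by (intro uniform_limit_theorem) auto
  moreover have "\<exists>K. compact K \<and> (\<forall>x. x \<notin> K \<longrightarrow> cmod (F n x) < e)" if "0 < e" for e
  proof -
    have e2: "0 < e / 2" using that by simp
    obtain p where p: "p \<in> C0" "\<And>y. cmod (F n y - p y) \<le> e / 2"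
      using approx[OF e2] by blast
    then obtain K where K: "compact K" "\<And>x. x \<notin> K \<Longrightarrow> cmod (p x) < e / 2"
      using e2 unfolding C0_def by blast
    have "cmod (F n x) < e" if "x \<notin> K" for x
      using norm_triangle_sub[of "F n x" "p x"] p(2)[of x] K(2)[OF that] by linarith
    then show ?thesis using K(1) by blast
  qed
  ultimately show ?thesis unfolding C0_def by blast
qed

lemma sc_fejer_mean_approx:
  assumes F: "F \<in> semicrossed \<phi>" and e: "0 < e"
  obtains K where "sc_bound \<phi> (\<lambda>n y. F n y - sc_fejer_mean K F n y) e"
proof -
  define e1 where "e1 = e / 3"
  have e1: "0 < e1" using e unfolding e1_def by simp
  obtain P where P: "sc_poly P" "sc_bound \<phi> (\<lambda>n y. F n y - P n y) e1"
    using semicrossed_approx[OF F e1] .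
  obtain D where "{n. P n \<noteq> (\<lambda>_. 0)} \<subseteq> {..<D}"
    using P(1) finite_nat_bounded unfolding sc_poly_def by blast
  then have D: "\<And>n. D \<le> n \<Longrightarrow> P n = (\<lambda>_. 0)" by fastforce
  have "\<forall>n. \<exists>B. \<forall>y. cmod (P n y) \<le> B"
    using P(1) C0_bounded unfolding sc_poly_def by blast
  from choice[OF this] obtain Bf where Bf: "\<And>n y. cmod (P n y) \<le> Bf n" by blast
  define K where "K = nat \<lceil>real D * (\<Sum>n<D. Bf n) / e1\<rceil>"
  have "real D * (\<Sum>n<D. Bf n) / e1 \<le> real K"
    unfolding K_def by (rule real_nat_ceiling_ge)
  then have "real D * (\<Sum>n<D. Bf n) \<le> e1 * real (Suc K)"
    using e1 by (simp add: divide_le_eq mult.commute distrib_left)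
  then have K_large: "real D / real (Suc K) * (\<Sum>n<D. Bf n) \<le> e1"
    by (subst times_divide_eq_left, subst pos_divide_le_eq) (simp_all add: mult.commute)
  have "sc_bound \<phi> (\<lambda>n y. complex_of_real (1 - fejer_weight K n) * P n y)
      (real D / real (Suc K) * (\<Sum>n<D. Bf n))"
    by (rule sc_bound_one_minus_fejer_weight[OF Bf D])
  then have tail: "sc_bound \<phi> (\<lambda>n y. complex_of_real (1 - fejer_weight K n) * P n y) e1"
    using K_large by (rule sc_bound_mono)
  have mean: "sc_bound \<phi> (sc_fejer_mean K (\<lambda>n y. - (F n y - P n y))) e1"
    by (intro sc_bound_fejer_mean sc_bound_uminus P(2))
  have "sc_bound \<phi> (\<lambda>n y. (F n y - P n y) + (complex_of_real (1 - fejer_weight K n) * P n y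
      + sc_fejer_mean K (\<lambda>n y. - (F n y - P n y)) n y)) (e1 + (e1 + e1))"
    by (intro sc_bound_add P(2) tail mean)
  moreover have "(\<lambda>n y. (F n y - P n y) + (complex_of_real (1 - fejer_weight K n) * P n y
      + sc_fejer_mean K (\<lambda>n y. - (F n y - P n y)) n y)) = (\<lambda>n y. F n y - sc_fejer_mean K F n y)"
    by (auto simp: sc_fejer_mean_def algebra_simps)
  ultimately show ?thesis using that unfolding e1_def by simp
qed

section \<open>The ideals attached to a decreasing family of closed sets\<close>

lemma compact_disjoint_decreasing_family:
  fixes Z :: "'i::linorder \<Rightarrow> 'a::topological_space set"
  assumes "compact S" "I \<noteq> {}" "\<And>i. i \<in> I \<Longrightarrow> closed (Z i)"
    and decreasing: "\<And>i j. i \<in> I \<Longrightarrow> j \<in> I \<Longrightarrow> i \<le> j \<Longrightarrow> Z j \<subseteq> Z i"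
    and "S \<inter> (\<Inter>i\<in>I. Z i) = {}"
  shows "\<exists>i\<in>I. S \<inter> Z i = {}"
proof (rule ccontr)
  assume meets: "\<not> ?thesis"
  have fip: "S \<inter> (\<Inter>i\<in>J. Z i) \<noteq> {}" if J: "finite J" "J \<subseteq> I" for J
  proof (cases "J = {}")
    case True
    then show ?thesis using meets \<open>I \<noteq> {}\<close> by blast
  next
    case False
    have "Z (Max J) \<subseteq> Z i" if "i \<in> J" for i
      using decreasing[of i "Max J"] Max_ge[OF J(1) that] Max_in[OF J(1) False] that J(2) by blast
    moreover have "S \<inter> Z (Max J) \<noteq> {}" using meets Max_in[OF J(1) False] J(2) by blast
    ultimately show ?thesis by blast
  qed
  have "S \<inter> (\<Inter>i\<in>I. Z i) \<noteq> {}"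
    by (rule compact_imp_fip_image[OF assms(1)]) (simp_all add: assms(3) fip)
  with assms(5) show False by blast
qed

lemma sc_closure_subset_sc_ideal_INT:
  "sc_closure \<phi> (\<Union>i\<in>I. sc_ideal \<phi> (Z i)) \<subseteq> sc_ideal \<phi> (\<Inter>i\<in>I. Z i)"
proof
  fix F assume F: "F \<in> sc_closure \<phi> (\<Union>i\<in>I. sc_ideal \<phi> (Z i))"
  have small: "cmod (F n y) \<le> e" if "0 < e" "n = 0 \<or> y \<in> (\<Inter>i\<in>I. Z i)" for n y e
  proof -
    obtain i G where G: "i \<in> I" "G \<in> sc_ideal \<phi> (Z i)" "sc_norm \<phi> (\<lambda>n y. F n y - G n y) < ereal e"
      using F \<open>0 < e\<close> unfolding sc_closure_def by blast
    then have "G n y = 0" using that(2) unfolding sc_ideal_def by (cases "n = 0") auto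
    with sc_bound_coeff[OF sc_bound_if_sc_norm_less[OF G(3)], of n y] show ?thesis by simp
  qed
  have "F n y = 0" if "n = 0 \<or> y \<in> (\<Inter>i\<in>I. Z i)" for n y
    using small[OF _ that] field_le_epsilon[of "cmod (F n y)" 0] by simp
  then show "F \<in> sc_ideal \<phi> (\<Inter>i\<in>I. Z i)"
    using F unfolding sc_closure_def sc_ideal_def by auto
qed

lemma norm_sc_fejer_mean_le: "cmod (sc_fejer_mean K F n y) \<le> cmod (F n y)"
  using fejer_weight_bounds[of K n]
  by (simp add: sc_fejer_mean_def norm_mult mult_left_le_one_le)

lemma sc_fejer_mean_eq_0: "K < n \<Longrightarrow> sc_fejer_mean K F n y = 0"
  by (simp add: sc_fejer_mean_def fejer_weight_eq_0)

lemma sc_bound_sc_fejer_mean_minus_shrink: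
  assumes "0 < d"
  shows "sc_bound \<phi> (\<lambda>n y. sc_fejer_mean K F n y - shrink d (sc_fejer_mean K F n) y) (real (Suc K) * d)"
proof (rule sc_bound_coeff_sum[where D = "Suc K"])
  let ?b = "\<lambda>n. if n < Suc K then d else 0"
  show "cmod (sc_fejer_mean K F n y - shrink d (sc_fejer_mean K F n) y) \<le> ?b n" for n y
  proof (cases "n < Suc K")
    case False
    then have "sc_fejer_mean K F n y = 0" by (simp add: sc_fejer_mean_eq_0)
    then show ?thesis using assms by (simp add: shrink_eq_0)
  qed (simp add: norm_diff_shrink_le[OF assms])
  show "0 \<le> ?b n" for n using assms by simp
qed simp_all

lemma shrink_sc_fejer_mean_in_sc_ideal:
  assumes F: "F \<in> semicrossed \<phi>" "F 0 = (\<lambda>_. 0)" and d: "0 < d"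
    and small: "\<And>n y. n \<le> K \<Longrightarrow> y \<in> Y \<Longrightarrow> cmod (F n y) < d"
  shows "(\<lambda>n. shrink d (sc_fejer_mean K F n)) \<in> sc_ideal \<phi> Y"
proof -
  let ?G = "\<lambda>n. shrink d (sc_fejer_mean K F n)"
  have mean_C0: "sc_fejer_mean K F n \<in> C0" for n
  proof (rule C0_dominated[OF semicrossed_coeff_C0[OF F(1)]])
    have "continuous_on UNIV (F n)" using semicrossed_coeff_C0[OF F(1)] unfolding C0_def by blast
    then show "continuous_on UNIV (sc_fejer_mean K F n)"
      unfolding sc_fejer_mean_def by (intro continuous_on_mult continuous_on_const)
  qed (rule norm_sc_fejer_mean_le)
  have "?G n \<in> C0" for n
  proof (rule C0_dominated[OF mean_C0])
    show "continuous_on UNIV (?G n)"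
      using mean_C0 d unfolding C0_def by (blast intro: continuous_on_shrink)
  qed (rule norm_shrink_le[OF d])
  moreover have "?G n = (\<lambda>_. 0)" if "K < n" for n
    using that d by (intro ext shrink_eq_0) (simp add: sc_fejer_mean_eq_0)
  then have "finite {n. ?G n \<noteq> (\<lambda>_. 0)}"
    by (auto intro: finite_subset[of _ "{..K}"] simp: not_le[symmetric])
  ultimately have "?G \<in> semicrossed \<phi>" by (intro sc_poly_in_semicrossed) (simp add: sc_poly_def)
  moreover have "?G 0 = (\<lambda>_. 0)"
    using F(2) d by (intro ext shrink_eq_0) (simp add: sc_fejer_mean_def)
  moreover have "?G n y = 0" if "y \<in> Y" for n y
    using small[of n y] that norm_sc_fejer_mean_le[of K F n y] sc_fejer_mean_eq_0[of K n F y] d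
    by (cases "n \<le> K") (auto intro!: shrink_eq_0)
  ultimately show ?thesis unfolding sc_ideal_def by blast
qed

lemma semicrossed_coeffs_small_on_member:
  fixes Z :: "'i::linorder \<Rightarrow> 'a::topological_space set"
  assumes family: "I \<noteq> {}" "\<And>i. i \<in> I \<Longrightarrow> closed (Z i)"
      "\<And>i j. i \<in> I \<Longrightarrow> j \<in> I \<Longrightarrow> i \<le> j \<Longrightarrow> Z j \<subseteq> Z i"
    and F: "F \<in> semicrossed \<phi>" "\<And>n y. y \<in> (\<Inter>i\<in>I. Z i) \<Longrightarrow> F n y = 0" and d: "0 < d"
  obtains i where "i \<in> I" "\<And>n y. n \<le> K \<Longrightarrow> y \<in> Z i \<Longrightarrow> cmod (F n y) < d"
proof -
  define S where "S = (\<Union>n\<le>K. {y. d \<le> cmod (F n y)})"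
  have S_compact: "compact S"
    unfolding S_def by (intro compact_UN compact_C0_superlevel semicrossed_coeff_C0[OF F(1)] d) simp
  have "\<not> d \<le> cmod (F n y)" if "y \<in> (\<Inter>i\<in>I. Z i)" for n y
    using F(2)[OF that] d by simp
  then have S_disjoint: "S \<inter> (\<Inter>i\<in>I. Z i) = {}" unfolding S_def by blast
  obtain i where i: "i \<in> I" "S \<inter> Z i = {}"
    using compact_disjoint_decreasing_family[OF S_compact family S_disjoint] ..
  have "cmod (F n y) < d" if "n \<le> K" "y \<in> Z i" for n y
  proof -
    have "y \<notin> S" using i(2) that(2) by blast
    then show ?thesis using that(1) unfolding S_def by (simp add: not_le)
  qed
  with i(1) show ?thesis by (rule that)
qed

lemma sc_ideal_INT_subset_sc_closure:
  fixes Z :: "'i::linorder \<Rightarrow> 'a::topological_space set"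
  assumes "I \<noteq> {}" "\<And>i. i \<in> I \<Longrightarrow> closed (Z i)"
    and "\<And>i j. i \<in> I \<Longrightarrow> j \<in> I \<Longrightarrow> i \<le> j \<Longrightarrow> Z j \<subseteq> Z i"
  shows "sc_ideal \<phi> (\<Inter>i\<in>I. Z i) \<subseteq> sc_closure \<phi> (\<Union>i\<in>I. sc_ideal \<phi> (Z i))"
proof
  fix F assume F: "F \<in> sc_ideal \<phi> (\<Inter>i\<in>I. Z i)"
  then have F_sc: "F \<in> semicrossed \<phi>" and F0: "F 0 = (\<lambda>_. 0)"
    and F_pos: "\<And>n y. 1 \<le> n \<Longrightarrow> y \<in> (\<Inter>i\<in>I. Z i) \<Longrightarrow> F n y = 0"
    unfolding sc_ideal_def by auto
  have F_vanish: "F n y = 0" if "y \<in> (\<Inter>i\<in>I. Z i)" for n y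
    using F0 F_pos[OF _ that] by (cases n) auto
  have "\<exists>G\<in>(\<Union>i\<in>I. sc_ideal \<phi> (Z i)). sc_norm \<phi> (\<lambda>n y. F n y - G n y) < ereal e"
    if e: "0 < e" for e
  proof -
    have "0 < e / 3" using e by simp
    then obtain K where K: "sc_bound \<phi> (\<lambda>n y. F n y - sc_fejer_mean K F n y) (e / 3)"
      using sc_fejer_mean_approx[OF F_sc] by blast
    define d where "d = e / 3 / real (Suc K)"
    have d: "0 < d" using e unfolding d_def by simp
    obtain i where i: "i \<in> I" "\<And>n y. n \<le> K \<Longrightarrow> y \<in> Z i \<Longrightarrow> cmod (F n y) < d"
      using semicrossed_coeffs_small_on_member[where I = I and Z = Z and K = K, OF assms F_sc F_vanish d]
      by blast
    let ?G = "\<lambda>n. shrink d (sc_fejer_mean K F n)"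
    have G_ideal: "?G \<in> sc_ideal \<phi> (Z i)"
      by (rule shrink_sc_fejer_mean_in_sc_ideal[OF F_sc F0 d i(2)])
    have "sc_bound \<phi> (\<lambda>n y. (F n y - sc_fejer_mean K F n y)
        + (sc_fejer_mean K F n y - ?G n y)) (e / 3 + real (Suc K) * d)"
      by (intro sc_bound_add K sc_bound_sc_fejer_mean_minus_shrink d)
    moreover have "(\<lambda>n y. (F n y - sc_fejer_mean K F n y) + (sc_fejer_mean K F n y - ?G n y))
        = (\<lambda>n y. F n y - ?G n y)" by (simp add: algebra_simps)
    moreover have "real (Suc K) * d = e / 3" unfolding d_def by (simp del: of_nat_Suc)
    ultimately have "sc_norm \<phi> (\<lambda>n y. F n y - ?G n y) \<le> ereal (e / 3 + e / 3)"
      unfolding sc_norm_le_iff_sc_bound by (simp only:)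
    also have "\<dots> < ereal e" using e by simp
    finally have "sc_norm \<phi> (\<lambda>n y. F n y - ?G n y) < ereal e" .
    then show ?thesis using i(1) G_ideal by (intro bexI[of _ ?G]) blast+
  qed
  with F_sc show "F \<in> sc_closure \<phi> (\<Union>i\<in>I. sc_ideal \<phi> (Z i))"
    unfolding sc_closure_def by blast
qed

section \<open>Iterated non-wandering sets\<close>

lemma wellorder_bot_or_succ_or_limit:
  "(\<forall>j. \<not> j < i) \<or> (\<exists>j. is_succ_of i j) \<or> is_limit (i::'o::wellorder)"
  unfolding is_succ_of_def is_limit_def by blast

lemma closed_nonwandering:
  assumes "closed Y" shows "closed (nonwandering \<phi> Y)"
proof -
  define W where "W = \<Union>{V. openin (top_of_set Y) V \<and> wandering_set \<phi> V}"
  have W: "openin (top_of_set Y) W" unfolding W_def by (rule openin_Union) auto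
  have "nonwandering \<phi> Y = Y - W" unfolding nonwandering_def W_def by blast
  then have "closedin (top_of_set Y) (nonwandering \<phi> Y)"
    using W by (simp add: closedin_diff)
  then show ?thesis using assms closedin_closed_trans by blast
qed

lemma iterated_nonwandering_closed:
  assumes "iterated_nonwandering \<phi> Xs" shows "closed (Xs i)"
proof (induction i rule: less_induct)
  case (less i)
  from wellorder_bot_or_succ_or_limit[of i] show ?case
  proof (elim disjE exE)
    assume "\<forall>j. \<not> j < i"
    then show ?thesis using assms unfolding iterated_nonwandering_def by simp
  next
    fix j assume "is_succ_of i j"
    then have "Xs i = nonwandering \<phi> (Xs j)" "j < i"
      using assms unfolding iterated_nonwandering_def is_succ_of_def by auto
    then show ?thesis using less closed_nonwandering by metis
  next
    assume "is_limit i"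
    then have "Xs i = (\<Inter>j\<in>{j. j < i}. Xs j)" using assms unfolding iterated_nonwandering_def by blast
    then show ?thesis using less by (simp add: closed_INT)
  qed
qed

lemma iterated_nonwandering_antimono:
  assumes "iterated_nonwandering \<phi> Xs" "j \<le> i" shows "Xs i \<subseteq> Xs j"
  using assms(2)
proof (induction i rule: less_induct)
  case (less i)
  show ?case
  proof (cases "j = i")
    case False
    with less.prems have "j < i" by simp
    from wellorder_bot_or_succ_or_limit[of i] show ?thesis
    proof (elim disjE exE)
      assume "\<forall>j. \<not> j < i"
      with \<open>j < i\<close> show ?thesis by blast
    next
      fix i' assume succ: "is_succ_of i i'"
      then have "Xs i \<subseteq> Xs i'"
        using assms(1) unfolding iterated_nonwandering_def nonwandering_def by auto
      moreover have "i' < i" "j \<le> i'" using succ \<open>j < i\<close> unfolding is_succ_of_def by (auto simp: not_less[symmetric])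
      ultimately show ?thesis using less.IH by blast
    next
      assume "is_limit i"
      then show ?thesis using assms(1) \<open>j < i\<close> unfolding iterated_nonwandering_def by blast
    qed
  qed simp
qed

theorem lemma2p4:
  fixes \<phi> :: "'a::metric_space \<Rightarrow> 'a"
    and Xs :: "'o::wellorder \<Rightarrow> 'a set"
    and \<gamma> :: 'o
  assumes "locally_compact_space (euclidean :: 'a topology)"
    and "\<exists>\<psi>. homeomorphism UNIV UNIV \<phi> \<psi>"
    and "iterated_nonwandering \<phi> Xs"
    and "\<forall>\<beta><\<gamma>. nonwandering \<phi> (Xs \<beta>) \<noteq> Xs \<beta>"
    and "is_limit \<gamma>"
  shows "sc_ideal \<phi> (Xs \<gamma>) = sc_closure \<phi> (\<Union>\<beta>\<in>{\<beta>. \<beta> < \<gamma>}. sc_ideal \<phi> (Xs \<beta>))"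
proof -
  have limit_stage: "Xs \<gamma> = (\<Inter>\<beta>\<in>{\<beta>. \<beta> < \<gamma>}. Xs \<beta>)"
    using assms(3,5) unfolding iterated_nonwandering_def by blast
  have nonempty: "{\<beta>. \<beta> < \<gamma>} \<noteq> {}" using assms(5) unfolding is_limit_def by blast
  have closed: "closed (Xs \<beta>)" for \<beta>
    by (rule iterated_nonwandering_closed[OF assms(3)])
  have decreasing: "Xs \<beta>' \<subseteq> Xs \<beta>" if "\<beta> \<le> \<beta>'" for \<beta> \<beta>'
    by (rule iterated_nonwandering_antimono[OF assms(3) that])
  have "sc_ideal \<phi> (Xs \<gamma>) \<subseteq> sc_closure \<phi> (\<Union>\<beta>\<in>{\<beta>. \<beta> < \<gamma>}. sc_ideal \<phi> (Xs \<beta>))"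
    unfolding limit_stage by (rule sc_ideal_INT_subset_sc_closure[OF nonempty closed decreasing])
  moreover have "sc_closure \<phi> (\<Union>\<beta>\<in>{\<beta>. \<beta> < \<gamma>}. sc_ideal \<phi> (Xs \<beta>)) \<subseteq> sc_ideal \<phi> (Xs \<gamma>)"
    unfolding limit_stage by (rule sc_closure_subset_sc_ideal_INT)
  ultimately show ?thesis by blast
qed

end
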